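(* Let $G$ be a simple graph and $S$ a $k$-simplicial set of $G$ such that both $G\setminus S$ and $G\setminus N_G[S]$ are $k$-shellable. Then $G$ is $k$-shellable.
   Context: $N_G(x)$ is the set of neighbours of $x$, $N_G[x]=N_G(x)\cup\{x\}$, $N_G[U]=\bigcup_{x\in U}N_G[x]$; $G\setminus U$ deletes the vertices of $U$ and incident edges; $G_U$ is the induced subgraph on $U$. A set $S$ of pairwise non-adjacent vertices of $G$ is a $k$-simplicial set if $G_{N_G[S]}$ is a complete $r$-partite graph (for some $r$) with $k$-element parts $S_1,\ldots,S_r$ such that for every part $S_l$ and every two vertices $x_i,x_j\in S_l$, $N_G(x_i)=N_G(x_j)$. A graph $H$ is $k$-shellable if its independence complex $\Delta_H$ (faces: sets of pairwise non-adjacent vertices) is. $\langle F_1,\ldots,F_s\rangle$ denotes the complex with facets $F_1,\dots,F_s$. A complex $\Gamma$ of dimension $d$ is $k$-shellable ($1\le k\le d+1$) if its facets can be ordered $F_1,\ldots,F_r$ such that for every $j=2,\ldots,r$, $\Gamma_j=\langle F_j\rangle\cap\langle F_1,\ldots,F_{j-1}\rangle$ satisfies (i) $\Gamma_j$ is generated by a nonempty set of faces of $\langle F_j\rangle$ of dimension $|F_j|-k-1$; (ii) if $\Gamma_j$ has more than one facet, then for every two distinct facets $\sigma,\tau$ of $\Gamma_j$, $F_j\subseteq\sigma\cup\tau$. *)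

theory Defs
  imports Main
begin

text \<open>Deleting a set U of vertices is
modelled by passing to the vertex set V - U (the edge relation is only ever
consulted between vertices of the current vertex set).\<close>

definition simple_graph :: "'a set \<Rightarrow> ('a \<Rightarrow> 'a \<Rightarrow> bool) \<Rightarrow> bool" where
  "simple_graph V E \<longleftrightarrow> finite V \<and> (\<forall>x y. E x y \<longrightarrow> x \<in> V \<and> y \<in> V)
     \<and> (\<forall>x y. E x y \<longrightarrow> E y x) \<and> (\<forall>x. \<not> E x x)"

definition nbhd :: "'a set \<Rightarrow> ('a \<Rightarrow> 'a \<Rightarrow> bool) \<Rightarrow> 'a \<Rightarrow> 'a set" where
  "nbhd V E x = {y \<in> V. E x y}"

definition closed_nbhd_set :: "'a set \<Rightarrow> ('a \<Rightarrow> 'a \<Rightarrow> bool) \<Rightarrow> 'a set \<Rightarrow> 'a set" where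
  "closed_nbhd_set V E U = (\<Union>x\<in>U. insert x (nbhd V E x))"

definition indep_complex :: "'a set \<Rightarrow> ('a \<Rightarrow> 'a \<Rightarrow> bool) \<Rightarrow> 'a set set" where
  "indep_complex V E = {F. F \<subseteq> V \<and> (\<forall>x\<in>F. \<forall>y\<in>F. \<not> E x y)}"

definition gen :: "'a set set \<Rightarrow> 'a set set" where
  "gen B = {F. \<exists>\<sigma>\<in>B. F \<subseteq> \<sigma>}"

definition facets :: "'a set set \<Rightarrow> 'a set set" where
  "facets \<Delta> = {F \<in> \<Delta>. \<forall>G\<in>\<Delta>. F \<subseteq> G \<longrightarrow> G = F}"

definition k_shellable :: "nat \<Rightarrow> 'a set set \<Rightarrow> bool" where
  "k_shellable k \<Delta> \<longleftrightarrow> 1 \<le> k \<and> (\<exists>F\<in>\<Delta>. k \<le> card F) \<and>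
    (\<exists>Fs :: 'a set list. distinct Fs \<and> set Fs = facets \<Delta> \<and>
      (\<forall>j. 0 < j \<and> j < length Fs \<longrightarrow>
        (let \<Gamma> = gen {Fs ! j} \<inter> gen (set (take j Fs)) in
          (\<exists>B. B \<noteq> {} \<and> (\<forall>\<sigma>\<in>B. \<sigma> \<subseteq> Fs ! j \<and> int (card \<sigma>) = int (card (Fs ! j)) - int k)
               \<and> \<Gamma> = gen B)
          \<and> (card (facets \<Gamma>) > 1 \<longrightarrow>
               (\<forall>\<sigma>\<in>facets \<Gamma>. \<forall>\<tau>\<in>facets \<Gamma>. \<sigma> \<noteq> \<tau> \<longrightarrow> Fs ! j \<subseteq> \<sigma> \<union> \<tau>)))))"

definition k_shellable_graph :: "nat \<Rightarrow> 'a set \<Rightarrow> ('a \<Rightarrow> 'a \<Rightarrow> bool) \<Rightarrow> bool" where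
  "k_shellable_graph k V E \<longleftrightarrow> k_shellable k (indep_complex V E)"

text \<open>k-simplicial set: S independent, and the induced graph on N[S] is complete
multipartite with parts (collected in P) of size k, vertices in a common part
having equal neighbourhoods in G.\<close>
definition k_simplicial :: "nat \<Rightarrow> 'a set \<Rightarrow> ('a \<Rightarrow> 'a \<Rightarrow> bool) \<Rightarrow> 'a set \<Rightarrow> bool" where
  "k_simplicial k V E S \<longleftrightarrow> S \<subseteq> V \<and> (\<forall>x\<in>S. \<forall>y\<in>S. \<not> E x y) \<and>
    (\<exists>P :: 'a set set. \<Union>P = closed_nbhd_set V E S
       \<and> (\<forall>A\<in>P. \<forall>B\<in>P. A \<noteq> B \<longrightarrow> A \<inter> B = {})
       \<and> (\<forall>A\<in>P. card A = k)
       \<and> (\<forall>A\<in>P. \<forall>B\<in>P. \<forall>x\<in>A. \<forall>y\<in>B. (E x y \<longleftrightarrow> A \<noteq> B))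
       \<and> (\<forall>A\<in>P. \<forall>x\<in>A. \<forall>y\<in>A. nbhd V E x = nbhd V E y))"

end

theory Submission
  imports Defs
begin

text \<open>The facets of $\Delta_G$ are the cones $S \cup F'$ over the facets $F'$ of $\Delta_{G \setminus N[S]}$
  and the facets of $\Delta_{G \setminus S}$ meeting $N[S]$; each of the latter meets $N[S]$ in exactly
  one part $A \neq S$. Shell the cones first, in the order of a shelling of $\Delta_{G \setminus N[S]}$,
  then the other facets in the order of a shelling of $\Delta_{G \setminus S}$. For such a facet F the
  omitted facets of $\Delta_{G \setminus S}$ missing $N[S]$ only have traces on F lying in cones, and the
  cones add just the face $F \setminus N[S] = F \setminus A$, of codimension $|A| = k$; every other
  generator of the intersection contains A, so the covering condition (ii) is kept.\<close>

text \<open>The generators all have the same size, so they are exactly the facets of the intersection,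
  and (ii) can be stated for them without the case distinction on their number.\<close>

definition shelling_faces :: "nat \<Rightarrow> 'a set \<Rightarrow> 'a set set \<Rightarrow> bool" where
  "shelling_faces k F B \<longleftrightarrow> (\<forall>\<sigma>\<in>B. \<sigma> \<subseteq> F \<and> card \<sigma> + k = card F)
     \<and> (\<forall>\<sigma>\<in>B. \<forall>\<tau>\<in>B. \<sigma> \<noteq> \<tau> \<longrightarrow> F \<subseteq> \<sigma> \<union> \<tau>)"

definition shelling_step :: "nat \<Rightarrow> 'a set \<Rightarrow> 'a set set \<Rightarrow> bool" where
  "shelling_step k F Prev \<longleftrightarrow> (\<exists>B. B \<noteq> {} \<and> shelling_faces k F B \<and> gen {F} \<inter> gen Prev = gen B)"

definition shelling_order :: "nat \<Rightarrow> 'a set list \<Rightarrow> bool" where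
  "shelling_order k Fs \<longleftrightarrow> (\<forall>xs F ys. Fs = xs @ F # ys \<longrightarrow> xs \<noteq> [] \<longrightarrow> shelling_step k F (set xs))"

lemma gen_empty [simp]: "gen {} = {}"
  by (simp add: gen_def)

lemma gen_Int_singleton: "gen {F} \<inter> gen X = gen ((\<inter>) F ` X)"
  by (auto simp: gen_def)

lemma mem_gen_Int_singleton_iff: "Z \<in> gen {F} \<inter> gen Y \<longleftrightarrow> Z \<subseteq> F \<and> (\<exists>G\<in>Y. Z \<subseteq> G)"
  by (auto simp: gen_def)

lemma mem_gen_Int_singletonI: "Z \<subseteq> F \<Longrightarrow> G \<in> Y \<Longrightarrow> Z \<subseteq> G \<Longrightarrow> Z \<in> gen {F} \<inter> gen Y"
  by (auto simp: gen_def)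

lemma gen_Un: "gen X \<union> gen Y = gen (X \<union> Y)"
  by (auto simp: gen_def)

lemma gen_mono:
  assumes "X \<subseteq> gen Y"
  shows "gen X \<subseteq> gen Y"
proof
  fix F assume "F \<in> gen X"
  then obtain x where "x \<in> X" "F \<subseteq> x" by (auto simp: gen_def)
  moreover obtain y where "y \<in> Y" "x \<subseteq> y" using assms \<open>x \<in> X\<close> by (auto simp: gen_def)
  ultimately show "F \<in> gen Y" by (auto simp: gen_def)
qed

lemma gen_image_Un_cong:
  assumes "gen X = gen Y"
  shows "gen ((\<union>) S ` X) = gen ((\<union>) S ` Y)"
proof -
  have "gen ((\<union>) S ` A) \<subseteq> gen ((\<union>) S ` B)" if "gen A = gen B" for A B :: "'a set set"
  proof (rule gen_mono, rule subsetI)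
    fix Z assume "Z \<in> (\<union>) S ` A"
    then obtain x where "x \<in> A" "Z = S \<union> x" by blast
    then have "x \<in> gen B" using that by (simp add: gen_def, blast)
    then obtain y where "y \<in> B" "x \<subseteq> y" by (auto simp: gen_def)
    with \<open>Z = S \<union> x\<close> show "Z \<in> gen ((\<union>) S ` B)" unfolding gen_def by blast
  qed
  with assms show ?thesis by (metis subset_antisym)
qed

lemma facets_gen_subset: "facets (gen X) \<subseteq> X"
proof
  fix F assume F: "F \<in> facets (gen X)"
  then obtain x where "x \<in> X" "F \<subseteq> x" by (auto simp: facets_def gen_def)
  moreover have "x \<in> gen X" using \<open>x \<in> X\<close> by (auto simp: gen_def)
  ultimately show "F \<in> X" using F unfolding facets_def by blast
qed

lemma facets_gen_equicardinal:
  assumes fin: "\<forall>\<sigma>\<in>B. finite \<sigma>" and equal_card: "\<forall>\<sigma>\<in>B. \<forall>\<tau>\<in>B. card \<sigma> = card \<tau>"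
  shows "facets (gen B) = B"
proof
  show "B \<subseteq> facets (gen B)"
  proof
    fix \<sigma> assume \<sigma>: "\<sigma> \<in> B"
    have "G = \<sigma>" if "G \<in> gen B" "\<sigma> \<subseteq> G" for G
    proof -
      obtain \<tau> where \<tau>: "\<tau> \<in> B" "G \<subseteq> \<tau>" using \<open>G \<in> gen B\<close> by (auto simp: gen_def)
      have "\<sigma> \<subseteq> \<tau>" using \<tau>(2) \<open>\<sigma> \<subseteq> G\<close> by (rule order_trans[rotated])
      moreover have "card \<sigma> = card \<tau>" using equal_card \<sigma> \<tau>(1) by blast
      moreover have "finite \<tau>" using fin \<tau>(1) by blast
      ultimately have "\<sigma> = \<tau>" using card_subset_eq by metis
      then show ?thesis using \<tau>(2) \<open>\<sigma> \<subseteq> G\<close> by auto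
    qed
    moreover have "\<sigma> \<in> gen B" using \<sigma> by (auto simp: gen_def)
    ultimately show "\<sigma> \<in> facets (gen B)" by (auto simp: facets_def)
  qed
qed (rule facets_gen_subset)

lemma facets_gen_shelling_faces:
  assumes "finite F" and "\<forall>\<sigma>\<in>B. \<sigma> \<subseteq> F \<and> card \<sigma> + k = card F"
  shows "facets (gen B) = B"
proof (rule facets_gen_equicardinal)
  show "\<forall>\<sigma>\<in>B. finite \<sigma>" using assms by (meson finite_subset)
  show "\<forall>\<sigma>\<in>B. \<forall>\<tau>\<in>B. card \<sigma> = card \<tau>" using assms(2) by (metis add_right_cancel)
qed

lemma shelling_condition_iff:
  assumes "finite F"
  shows "(\<exists>B. B \<noteq> {} \<and> (\<forall>\<sigma>\<in>B. \<sigma> \<subseteq> F \<and> int (card \<sigma>) = int (card F) - int k)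
              \<and> gen {F} \<inter> gen Prev = gen B)
          \<and> (card (facets (gen {F} \<inter> gen Prev)) > 1 \<longrightarrow>
              (\<forall>\<sigma>\<in>facets (gen {F} \<inter> gen Prev). \<forall>\<tau>\<in>facets (gen {F} \<inter> gen Prev).
                 \<sigma> \<noteq> \<tau> \<longrightarrow> F \<subseteq> \<sigma> \<union> \<tau>))
         \<longleftrightarrow> shelling_step k F Prev"
    (is "(\<exists>B. ?ridges B) \<and> ?cover \<longleftrightarrow> _")
proof -
  have int_card: "(\<forall>\<sigma>\<in>B. \<sigma> \<subseteq> F \<and> int (card \<sigma>) = int (card F) - int k)
      \<longleftrightarrow> (\<forall>\<sigma>\<in>B. \<sigma> \<subseteq> F \<and> card \<sigma> + k = card F)" for B :: "'a set set"
    by (intro ball_cong conj_cong refl) linarith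
  have cover_iff: "?cover \<longleftrightarrow> (\<forall>\<sigma>\<in>B. \<forall>\<tau>\<in>B. \<sigma> \<noteq> \<tau> \<longrightarrow> F \<subseteq> \<sigma> \<union> \<tau>)"
    if faces: "\<forall>\<sigma>\<in>B. \<sigma> \<subseteq> F \<and> card \<sigma> + k = card F" and \<Gamma>: "gen {F} \<inter> gen Prev = gen B" for B
  proof -
    have facets: "facets (gen B) = B" using assms faces by (rule facets_gen_shelling_faces)
    have "finite B" using faces assms by (metis Pow_iff finite_Pow_iff finite_subset subsetI)
    have "card B > 1" if "\<sigma> \<in> B" "\<tau> \<in> B" "\<sigma> \<noteq> \<tau>" for \<sigma> \<tau>
    proof -
      have "card {\<sigma>, \<tau>} \<le> card B" using that \<open>finite B\<close> by (intro card_mono) auto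
      then show ?thesis using \<open>\<sigma> \<noteq> \<tau>\<close> by simp
    qed
    then show ?thesis unfolding \<Gamma> facets by blast
  qed
  show ?thesis
  proof
    assume H: "(\<exists>B. ?ridges B) \<and> ?cover"
    obtain B where "?ridges B" using conjunct1[OF H] ..
    then have B: "B \<noteq> {}" and faces: "\<forall>\<sigma>\<in>B. \<sigma> \<subseteq> F \<and> card \<sigma> + k = card F"
      and \<Gamma>: "gen {F} \<inter> gen Prev = gen B"
      using int_card[of B] by simp_all
    have "\<forall>\<sigma>\<in>B. \<forall>\<tau>\<in>B. \<sigma> \<noteq> \<tau> \<longrightarrow> F \<subseteq> \<sigma> \<union> \<tau>"
      using cover_iff[OF faces \<Gamma>] conjunct2[OF H] by (rule iffD1)
    with faces have "shelling_faces k F B" unfolding shelling_faces_def by (rule conjI)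
    with B \<Gamma> show "shelling_step k F Prev" unfolding shelling_step_def by (intro exI[of _ B] conjI)
  next
    assume "shelling_step k F Prev"
    then obtain B where B: "B \<noteq> {}" "shelling_faces k F B" and \<Gamma>: "gen {F} \<inter> gen Prev = gen B"
      unfolding shelling_step_def by blast
    then have faces: "\<forall>\<sigma>\<in>B. \<sigma> \<subseteq> F \<and> card \<sigma> + k = card F"
      and cover: "\<forall>\<sigma>\<in>B. \<forall>\<tau>\<in>B. \<sigma> \<noteq> \<tau> \<longrightarrow> F \<subseteq> \<sigma> \<union> \<tau>"
      unfolding shelling_faces_def by simp_all
    have "?ridges B" using B(1) faces \<Gamma> int_card[of B] by simp
    moreover have ?cover using cover_iff[OF faces \<Gamma>] cover by (rule iffD2)
    ultimately show "(\<exists>B. ?ridges B) \<and> ?cover" by (rule conjI[OF exI])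
  qed
qed

lemma all_nth_take_iff_all_splits:
  "(\<forall>j. 0 < j \<and> j < length xs \<longrightarrow> P (xs ! j) (take j xs)) \<longleftrightarrow>
   (\<forall>ys x zs. xs = ys @ x # zs \<longrightarrow> ys \<noteq> [] \<longrightarrow> P x ys)"
proof
  assume H: "\<forall>j. 0 < j \<and> j < length xs \<longrightarrow> P (xs ! j) (take j xs)"
  show "\<forall>ys x zs. xs = ys @ x # zs \<longrightarrow> ys \<noteq> [] \<longrightarrow> P x ys"
  proof (intro allI impI)
    fix ys x zs assume "xs = ys @ x # zs" "ys \<noteq> []"
    then show "P x ys" using H[rule_format, of "length ys"] by simp
  qed
next
  assume H: "\<forall>ys x zs. xs = ys @ x # zs \<longrightarrow> ys \<noteq> [] \<longrightarrow> P x ys"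
  show "\<forall>j. 0 < j \<and> j < length xs \<longrightarrow> P (xs ! j) (take j xs)"
  proof (intro allI impI)
    fix j assume j: "0 < j \<and> j < length xs"
    then have "xs = take j xs @ xs ! j # drop (Suc j) xs" by (simp add: id_take_nth_drop)
    moreover have "take j xs \<noteq> []" using j by auto
    ultimately show "P (xs ! j) (take j xs)" using H by metis
  qed
qed

lemma k_shellable_iff_shelling_order:
  assumes "\<forall>F\<in>\<Delta>. finite F"
  shows "k_shellable k \<Delta> \<longleftrightarrow> 1 \<le> k \<and> (\<exists>F\<in>\<Delta>. k \<le> card F) \<and>
    (\<exists>Fs. distinct Fs \<and> set Fs = facets \<Delta> \<and> shelling_order k Fs)"
proof -
  have "k_shellable k \<Delta> \<longleftrightarrow> 1 \<le> k \<and> (\<exists>F\<in>\<Delta>. k \<le> card F) \<and>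
    (\<exists>Fs. distinct Fs \<and> set Fs = facets \<Delta> \<and>
      (\<forall>j. 0 < j \<and> j < length Fs \<longrightarrow> shelling_step k (Fs ! j) (set (take j Fs))))"
    unfolding k_shellable_def Let_def using assms
    by (intro conj_cong refl ex_cong1 all_cong shelling_condition_iff) (auto simp: facets_def)
  then show ?thesis
    by (simp only: shelling_order_def
        all_nth_take_iff_all_splits[where P = "\<lambda>F xs. shelling_step k F (set xs)"])
qed

lemma shelling_order_append:
  assumes "shelling_order k Fs"
    and "\<And>ys F zs. Gs = ys @ F # zs \<Longrightarrow> Fs @ ys \<noteq> [] \<Longrightarrow> shelling_step k F (set Fs \<union> set ys)"
  shows "shelling_order k (Fs @ Gs)"
  unfolding shelling_order_def
proof (intro allI impI)
  fix xs F ys assume split: "Fs @ Gs = xs @ F # ys" and "xs \<noteq> []"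
  then obtain us where "Fs = xs @ us \<and> us @ Gs = F # ys \<or> Fs @ us = xs \<and> Gs = us @ F # ys"
    by (auto simp: append_eq_append_conv2)
  then show "shelling_step k F (set xs)"
  proof (elim disjE conjE)
    assume us: "Fs = xs @ us" "us @ Gs = F # ys"
    show ?thesis
    proof (cases us)
      case Nil
      then show ?thesis using us assms(2)[of "[]" F ys] \<open>xs \<noteq> []\<close> by simp
    next
      case (Cons u us')
      then have "Fs = xs @ F # us'" using us by simp
      then show ?thesis using assms(1) \<open>xs \<noteq> []\<close> unfolding shelling_order_def by blast
    qed
  next
    assume "Fs @ us = xs" "Gs = us @ F # ys"
    then show ?thesis using assms(2)[of us F ys] \<open>xs \<noteq> []\<close> by auto
  qed
qed

lemma filter_eq_append_ConsD:
  "filter P xs = ys @ x # zs \<Longrightarrow> \<exists>us vs. xs = us @ x # vs \<and> filter P us = ys"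
proof (induction xs arbitrary: ys)
  case (Cons a xs)
  show ?case
  proof (cases "P a \<and> ys \<noteq> []")
    case True
    then obtain ys' where "ys = a # ys'" "filter P xs = ys' @ x # zs"
      using Cons.prems by (cases ys) auto
    with Cons.IH True show ?thesis by (metis append_Cons filter.simps(2))
  next
    case False
    then have "P a \<Longrightarrow> a = x \<and> filter P xs = zs" using Cons.prems by simp
    with False Cons.IH Cons.prems show ?thesis
      by (cases "P a") (fastforce intro: exI[of _ "[]"], metis append_Cons filter.simps(2))
  qed
qed simp

lemma shelling_step_cone:
  assumes "finite S" "finite F" "S \<inter> F = {}" "shelling_step k F Prev"
  shows "shelling_step k (S \<union> F) ((\<union>) S ` Prev)"
proof -
  obtain B where B: "B \<noteq> {}" "shelling_faces k F B" and \<Gamma>: "gen {F} \<inter> gen Prev = gen B"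
    using assms(4) unfolding shelling_step_def by blast
  have faces: "\<forall>\<sigma>\<in>B. \<sigma> \<subseteq> F \<and> card \<sigma> + k = card F"
    and cover: "\<forall>\<sigma>\<in>B. \<forall>\<tau>\<in>B. \<sigma> \<noteq> \<tau> \<longrightarrow> F \<subseteq> \<sigma> \<union> \<tau>"
    using B(2) unfolding shelling_faces_def by simp_all
  have card_cone: "card (S \<union> \<sigma>) = card S + card \<sigma>" if "\<sigma> \<subseteq> F" for \<sigma>
  proof (rule card_Un_disjoint)
    show "finite \<sigma>" using that assms(2) by (rule finite_subset)
    show "S \<inter> \<sigma> = {}" using that assms(3) by blast
  qed (rule assms(1))
  have "shelling_faces k (S \<union> F) ((\<union>) S ` B)"
    unfolding shelling_faces_def
  proof (intro conjI ballI impI)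
    fix \<sigma>' assume "\<sigma>' \<in> (\<union>) S ` B"
    then obtain \<sigma> where "\<sigma> \<in> B" "\<sigma>' = S \<union> \<sigma>" by blast
    then show "\<sigma>' \<subseteq> S \<union> F" "card \<sigma>' + k = card (S \<union> F)"
      using faces card_cone[of \<sigma>] card_cone[of F] by auto
  next
    fix \<sigma>' \<tau>' assume "\<sigma>' \<in> (\<union>) S ` B" "\<tau>' \<in> (\<union>) S ` B" "\<sigma>' \<noteq> \<tau>'"
    then show "S \<union> F \<subseteq> \<sigma>' \<union> \<tau>'" using cover by blast
  qed
  moreover have "gen {S \<union> F} \<inter> gen ((\<union>) S ` Prev) = gen ((\<union>) S ` B)"
  proof -
    have image: "(\<inter>) (S \<union> F) ` (\<union>) S ` Prev = (\<union>) S ` (\<inter>) F ` Prev"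
      unfolding image_image by (simp add: Un_Int_distrib)
    have "gen ((\<inter>) F ` Prev) = gen B" using \<Gamma> by (simp only: gen_Int_singleton)
    then have "gen ((\<union>) S ` (\<inter>) F ` Prev) = gen ((\<union>) S ` B)" by (rule gen_image_Un_cong)
    then show ?thesis unfolding gen_Int_singleton image .
  qed
  moreover have "(\<union>) S ` B \<noteq> {}" using B(1) by simp
  ultimately show ?thesis unfolding shelling_step_def by (intro exI[of _ "(\<union>) S ` B"] conjI)
qed

lemma shelling_order_cone:
  assumes "shelling_order k Fs" "finite S" "\<forall>F\<in>set Fs. finite F \<and> S \<inter> F = {}"
  shows "shelling_order k (map ((\<union>) S) Fs)"
  unfolding shelling_order_def
proof (intro allI impI)
  fix xs G ys assume "map ((\<union>) S) Fs = xs @ G # ys" "xs \<noteq> []"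
  then obtain us F vs where Fs: "Fs = us @ F # vs" "xs = map ((\<union>) S) us" "G = S \<union> F"
    by (auto simp: map_eq_append_conv Cons_eq_map_conv)
  then have "shelling_step k F (set us)" using assms(1) \<open>xs \<noteq> []\<close> by (auto simp: shelling_order_def)
  then show "shelling_step k G (set xs)"
    using Fs assms(2,3) by (auto intro: shelling_step_cone)
qed

lemma shelling_step_insert_ridge:
  assumes faces: "shelling_faces k F B" and R: "R \<subseteq> F" "card R + k = card F"
    and contains: "\<forall>\<sigma>\<in>B. \<sigma> \<noteq> R \<longrightarrow> F - R \<subseteq> \<sigma>"
    and \<Gamma>: "gen {F} \<inter> gen Prev = gen B \<union> gen {R}"
  shows "shelling_step k F Prev"
proof -
  have "shelling_faces k F (insert R B)"
    using faces R contains unfolding shelling_faces_def by blast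
  moreover have "gen {F} \<inter> gen Prev = gen (insert R B)"
    using \<Gamma> gen_Un[of B "{R}"] by simp
  ultimately show ?thesis unfolding shelling_step_def by (intro exI[of _ "insert R B"] conjI) auto
qed

lemma facet_indep_complex_iff:
  assumes "simple_graph V E"
  shows "F \<in> facets (indep_complex W E) \<longleftrightarrow>
    F \<subseteq> W \<and> (\<forall>x\<in>F. \<forall>y\<in>F. \<not> E x y) \<and> (\<forall>y\<in>W - F. \<exists>x\<in>F. E x y)"
proof
  assume F: "F \<in> facets (indep_complex W E)"
  then have indep: "F \<subseteq> W" "\<forall>x\<in>F. \<forall>y\<in>F. \<not> E x y"
    by (auto simp: facets_def indep_complex_def)
  have "\<exists>x\<in>F. E x y" if "y \<in> W - F" for y
  proof (rule ccontr)
    assume "\<not> (\<exists>x\<in>F. E x y)"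
    with indep that assms have "insert y F \<in> indep_complex W E"
      by (auto simp: indep_complex_def simple_graph_def)
    with F that show False by (auto simp: facets_def)
  qed
  with indep show "F \<subseteq> W \<and> (\<forall>x\<in>F. \<forall>y\<in>F. \<not> E x y) \<and> (\<forall>y\<in>W - F. \<exists>x\<in>F. E x y)" by blast
next
  assume F: "F \<subseteq> W \<and> (\<forall>x\<in>F. \<forall>y\<in>F. \<not> E x y) \<and> (\<forall>y\<in>W - F. \<exists>x\<in>F. E x y)"
  have "G = F" if G: "G \<in> indep_complex W E" "F \<subseteq> G" for G
  proof (rule ccontr)
    assume "G \<noteq> F"
    then obtain y where "y \<in> G - F" using G(2) by blast
    with F G show False unfolding indep_complex_def by blast
  qed
  with F show "F \<in> facets (indep_complex W E)" by (auto simp: facets_def indep_complex_def)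
qed

lemma finite_indep_complex_face: "finite W \<Longrightarrow> F \<in> indep_complex W E \<Longrightarrow> finite F"
  by (auto simp: indep_complex_def intro: finite_subset)

lemma exists_facet_superset:
  assumes "finite W" "X \<in> indep_complex W E"
  shows "\<exists>F\<in>facets (indep_complex W E). X \<subseteq> F"
proof -
  have "finite (indep_complex W E)"
    using assms(1) by (auto simp: indep_complex_def intro: finite_subset[of _ "Pow W"])
  then obtain F where "F \<in> indep_complex W E" "X \<subseteq> F"
      "\<forall>G\<in>indep_complex W E. F \<subseteq> G \<longrightarrow> F = G"
    using finite_has_maximal2[OF _ assms(2)] by blast
  then show ?thesis by (auto simp: facets_def)
qed

locale k_simplicial_partition =
  fixes V :: "'a set" and E :: "'a \<Rightarrow> 'a \<Rightarrow> bool" and S :: "'a set" and k :: nat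
    and P :: "'a set set"
  assumes graph: "simple_graph V E"
    and S_subset: "S \<subseteq> V" and S_indep: "\<forall>x\<in>S. \<forall>y\<in>S. \<not> E x y" and S_nonempty: "S \<noteq> {}"
    and parts_Union: "\<Union>P = closed_nbhd_set V E S"
    and parts_disjoint: "\<forall>A\<in>P. \<forall>B\<in>P. A \<noteq> B \<longrightarrow> A \<inter> B = {}"
    and parts_card: "\<forall>A\<in>P. card A = k"
    and parts_edge: "\<forall>A\<in>P. \<forall>B\<in>P. \<forall>x\<in>A. \<forall>y\<in>B. E x y \<longleftrightarrow> A \<noteq> B"
    and parts_nbhd: "\<forall>A\<in>P. \<forall>x\<in>A. \<forall>y\<in>A. nbhd V E x = nbhd V E y"
begin

abbreviation NS :: "'a set" where
  "NS \<equiv> closed_nbhd_set V E S"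

lemma finite_V: "finite V"
  and edge_in_V: "E x y \<Longrightarrow> x \<in> V \<and> y \<in> V"
  and edge_sym: "E x y \<Longrightarrow> E y x"
  using graph by (auto simp: simple_graph_def)

lemma mem_NS_iff: "y \<in> NS \<longleftrightarrow> y \<in> S \<or> (\<exists>s\<in>S. y \<in> V \<and> E s y)"
  by (auto simp: closed_nbhd_set_def nbhd_def)

lemma S_subset_NS: "S \<subseteq> NS" and NS_subset: "NS \<subseteq> V"
  using S_subset by (auto simp: mem_NS_iff)

lemma S_in_parts: "S \<in> P"
proof -
  obtain x where "x \<in> S" using S_nonempty by blast
  then obtain A where A: "A \<in> P" "x \<in> A" using S_subset_NS parts_Union by blast
  have "S \<subseteq> A"
  proof
    fix s assume "s \<in> S"
    then obtain A' where "A' \<in> P" "s \<in> A'" using S_subset_NS parts_Union by blast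
    with A \<open>x \<in> S\<close> \<open>s \<in> S\<close> S_indep parts_edge show "s \<in> A" by metis
  qed
  moreover have "A \<subseteq> S"
  proof
    fix a assume "a \<in> A"
    then have "a \<in> NS" using A(1) parts_Union by blast
    moreover have "\<not> E s a" if "s \<in> S" for s
      using parts_edge A(1) \<open>a \<in> A\<close> \<open>S \<subseteq> A\<close> that by blast
    ultimately show "a \<in> S" by (auto simp: mem_NS_iff)
  qed
  ultimately show ?thesis using A(1) by simp
qed

lemma card_S: "card S = k"
  using S_in_parts parts_card by blast

lemma edge_from_S_iff:
  assumes "s \<in> S"
  shows "E s y \<longleftrightarrow> y \<in> NS - S"
proof
  assume "E s y"
  then show "y \<in> NS - S" using assms S_indep edge_in_V by (auto simp: mem_NS_iff)
next
  assume "y \<in> NS - S"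
  then obtain A where "A \<in> P" "y \<in> A" "A \<noteq> S" using parts_Union by blast
  then show "E s y" using assms S_in_parts parts_edge by blast
qed

text \<open>\<open>del_S\<close> and \<open>link_S\<close> are the complexes of $G \setminus S$ and $G \setminus N_G[S]$; the latter is
  the link of the face S.\<close>

abbreviation del_S :: "'a set set" where
  "del_S \<equiv> indep_complex (V - S) E"

abbreviation link_S :: "'a set set" where
  "link_S \<equiv> indep_complex (V - NS) E"

lemmas facet_iff = facet_indep_complex_iff[OF graph]

lemma cone_facet:
  assumes "F \<in> facets link_S"
  shows "S \<union> F \<in> facets (indep_complex V E)"
proof -
  have F: "F \<subseteq> V - NS" "\<forall>x\<in>F. \<forall>y\<in>F. \<not> E x y" "\<forall>y\<in>V - NS - F. \<exists>x\<in>F. E x y"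
    using assms by (simp_all add: facet_iff)
  have no_edge: "\<not> E s x" "\<not> E x s" if "s \<in> S" "x \<in> F" for s x
    using that F(1) edge_from_S_iff edge_sym by blast+
  obtain s0 where "s0 \<in> S" using S_nonempty by blast
  have "\<exists>x\<in>S \<union> F. E x y" if "y \<in> V - (S \<union> F)" for y
  proof (cases "y \<in> NS")
    case True
    then show ?thesis using that \<open>s0 \<in> S\<close> edge_from_S_iff by blast
  next
    case False
    then show ?thesis using that F(3) by blast
  qed
  then show ?thesis
    using F(1,2) S_subset S_indep no_edge by (auto simp: facet_iff)
qed

lemma deletion_facet:
  assumes "F \<in> facets del_S" "F \<inter> NS \<noteq> {}"
  shows "F \<in> facets (indep_complex V E)"
proof -
  have F: "F \<subseteq> V - S" "\<forall>x\<in>F. \<forall>y\<in>F. \<not> E x y" "\<forall>y\<in>V - S - F. \<exists>x\<in>F. E x y"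
    using assms(1) by (simp_all add: facet_iff)
  obtain z where "z \<in> F" "z \<in> NS" using assms(2) by blast
  have "\<exists>x\<in>F. E x y" if "y \<in> V - F" for y
  proof (cases "y \<in> S")
    case True
    then have "E y z" using \<open>z \<in> F\<close> \<open>z \<in> NS\<close> F(1) edge_from_S_iff by blast
    then show ?thesis using \<open>z \<in> F\<close> edge_sym by blast
  next
    case False
    then show ?thesis using that F(3) by blast
  qed
  then show ?thesis using F(1,2) by (auto simp: facet_iff)
qed

lemma facet_cases:
  assumes "F \<in> facets (indep_complex V E)"
  shows "F \<in> (\<union>) S ` facets link_S \<or> (F \<in> facets del_S \<and> F \<inter> NS \<noteq> {})"
proof -
  have F: "F \<subseteq> V" "\<forall>x\<in>F. \<forall>y\<in>F. \<not> E x y" and maximal: "\<forall>y\<in>V - F. \<exists>x\<in>F. E x y"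
    using assms by (simp_all add: facet_iff)
  show ?thesis
  proof (cases "F \<inter> S = {}")
    case False
    then obtain s0 where s0: "s0 \<in> F" "s0 \<in> S" by blast
    have "S \<subseteq> F"
    proof
      fix s assume "s \<in> S"
      show "s \<in> F"
      proof (rule ccontr)
        assume "s \<notin> F"
        then obtain x where "x \<in> F" "E x s" using maximal \<open>s \<in> S\<close> S_subset by blast
        then have "x \<in> NS - S" using \<open>s \<in> S\<close> edge_from_S_iff edge_sym by blast
        then have "E s0 x" using s0(2) edge_from_S_iff by blast
        then show False using F(2) s0(1) \<open>x \<in> F\<close> by blast
      qed
    qed
    have "F - S \<subseteq> V - NS"
      using F s0 edge_from_S_iff by blast
    moreover have "\<exists>x\<in>F - S. E x y" if "y \<in> V - NS - (F - S)" for y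
    proof -
      have "y \<in> V - F" using that S_subset_NS by blast
      then obtain x where "x \<in> F" "E x y" using maximal by blast
      moreover have "x \<notin> S" using that \<open>E x y\<close> edge_from_S_iff by blast
      ultimately show ?thesis by blast
    qed
    ultimately have "F - S \<in> facets link_S" using F(2) by (auto simp: facet_iff)
    moreover have "F = S \<union> (F - S)" using \<open>S \<subseteq> F\<close> by blast
    ultimately show ?thesis by blast
  next
    case True
    then have "F \<in> facets del_S" using F maximal by (auto simp: facet_iff)
    moreover have "F \<inter> NS \<noteq> {}"
    proof
      assume "F \<inter> NS = {}"
      obtain s0 where "s0 \<in> S" using S_nonempty by blast
      then obtain x where "x \<in> F" "E x s0" using maximal True S_subset by blast
      then have "x \<in> NS" using \<open>s0 \<in> S\<close> edge_from_S_iff edge_sym by blast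
      with \<open>x \<in> F\<close> \<open>F \<inter> NS = {}\<close> show False by blast
    qed
    ultimately show ?thesis by blast
  qed
qed

lemma facets_indep_complex_eq:
  "facets (indep_complex V E) = (\<union>) S ` facets link_S \<union> {F \<in> facets del_S. F \<inter> NS \<noteq> {}}"
proof
  show "facets (indep_complex V E) \<subseteq> (\<union>) S ` facets link_S \<union> {F \<in> facets del_S. F \<inter> NS \<noteq> {}}"
    using facet_cases by blast
  show "(\<union>) S ` facets link_S \<union> {F \<in> facets del_S. F \<inter> NS \<noteq> {}} \<subseteq> facets (indep_complex V E)"
    using cone_facet deletion_facet by blast
qed

lemma part_subset_deletion_facet:
  assumes G: "G \<in> facets del_S" and A: "A \<in> P" "A \<noteq> S" and z: "z \<in> G" "z \<in> A"
  shows "A \<subseteq> G"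
proof
  fix a assume "a \<in> A"
  show "a \<in> G"
  proof (rule ccontr)
    assume "a \<notin> G"
    have "A \<subseteq> NS" "A \<inter> S = {}" using A parts_Union parts_disjoint S_in_parts by blast+
    then have "a \<in> V - S - G" using \<open>a \<in> A\<close> \<open>a \<notin> G\<close> NS_subset by blast
    moreover have "\<forall>y\<in>V - S - G. \<exists>x\<in>G. E x y" using G by (simp add: facet_iff)
    ultimately obtain f where "f \<in> G" "E f a" by blast
    then have "f \<in> nbhd V E a" using edge_in_V edge_sym by (auto simp: nbhd_def)
    moreover have "nbhd V E a = nbhd V E z" using parts_nbhd A(1) \<open>a \<in> A\<close> z(2) by blast
    ultimately have "E z f" by (auto simp: nbhd_def)
    with \<open>f \<in> G\<close> z(1) G show False by (auto simp: facet_iff)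
  qed
qed

lemma deletion_facet_Int_NS:
  assumes G: "G \<in> facets del_S" and "y \<in> G" "y \<in> NS"
  obtains A where "A \<in> P" "A \<noteq> S" "G \<inter> NS = A"
proof -
  obtain A where A: "A \<in> P" "y \<in> A" using \<open>y \<in> NS\<close> parts_Union by blast
  have "y \<notin> S" using G \<open>y \<in> G\<close> by (auto simp: facet_iff)
  then have "A \<noteq> S" using A(2) by blast
  have "G \<inter> NS \<subseteq> A"
  proof
    fix w assume w: "w \<in> G \<inter> NS"
    then obtain A' where "A' \<in> P" "w \<in> A'" using parts_Union by blast
    moreover have "\<not> E y w" using G \<open>y \<in> G\<close> w by (auto simp: facet_iff)
    ultimately show "w \<in> A" using A parts_edge by blast
  qed
  moreover have "A \<subseteq> G \<inter> NS"
    using part_subset_deletion_facet[OF G A(1) \<open>A \<noteq> S\<close> \<open>y \<in> G\<close> A(2)] A parts_Union by blast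
  ultimately show ?thesis using that A(1) \<open>A \<noteq> S\<close> by blast
qed

lemma facet_link_superset:
  assumes "X \<subseteq> V - NS" "\<forall>x\<in>X. \<forall>y\<in>X. \<not> E x y"
  obtains F' where "F' \<in> facets link_S" "X \<subseteq> F'"
  using exists_facet_superset[of "V - NS" X E] assms finite_V by (auto simp: indep_complex_def)

lemma gen_Int_with_cones:
  assumes F: "F \<in> facets del_S" and X: "X \<subseteq> facets del_S"
  shows "gen {F} \<inter> gen ((\<union>) S ` facets link_S \<union> {G \<in> X. G \<inter> NS \<noteq> {}})
    = (gen {F} \<inter> gen X) \<union> gen {F - NS}"
proof (intro equalityI subsetI)
  have F_indep: "F \<subseteq> V - S" "\<forall>x\<in>F. \<forall>y\<in>F. \<not> E x y" using F by (simp_all add: facet_iff)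
  fix Z
  assume "Z \<in> gen {F} \<inter> gen ((\<union>) S ` facets link_S \<union> {G \<in> X. G \<inter> NS \<noteq> {}})"
  then obtain G where Z: "Z \<subseteq> F" "Z \<subseteq> G" and "G \<in> (\<union>) S ` facets link_S \<or> G \<in> X"
    unfolding mem_gen_Int_singleton_iff by blast
  then show "Z \<in> (gen {F} \<inter> gen X) \<union> gen {F - NS}"
  proof (elim disjE)
    assume "G \<in> (\<union>) S ` facets link_S"
    then have "G \<subseteq> S \<union> (V - NS)" by (auto simp: facet_iff)
    then have "Z \<subseteq> F - NS" using Z F_indep(1) by blast
    then show ?thesis by (simp add: gen_def)
  next
    assume "G \<in> X"
    then have "Z \<in> gen {F} \<inter> gen X" using Z unfolding mem_gen_Int_singleton_iff by blast
    then show ?thesis by (rule UnI1)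
  qed
next
  have F_indep: "F \<subseteq> V - S" "\<forall>x\<in>F. \<forall>y\<in>F. \<not> E x y" using F by (simp_all add: facet_iff)
  fix Z assume "Z \<in> (gen {F} \<inter> gen X) \<union> gen {F - NS}"
  then consider (old) G where "Z \<subseteq> F" "G \<in> X" "Z \<subseteq> G" | (link) "Z \<subseteq> F - NS"
    unfolding mem_gen_Int_singleton_iff by (auto simp: gen_def)
  then show "Z \<in> gen {F} \<inter> gen ((\<union>) S ` facets link_S \<union> {G \<in> X. G \<inter> NS \<noteq> {}})"
  proof cases
    case (old G)
    show ?thesis
    proof (cases "G \<inter> NS = {}")
      case True
      have "G \<subseteq> V - NS" "\<forall>x\<in>G. \<forall>y\<in>G. \<not> E x y"
      proof -
        have "G \<in> facets del_S" using X \<open>G \<in> X\<close> by blast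
        then have "G \<subseteq> V - S" "\<forall>x\<in>G. \<forall>y\<in>G. \<not> E x y" by (simp_all add: facet_iff)
        with True show "G \<subseteq> V - NS" "\<forall>x\<in>G. \<forall>y\<in>G. \<not> E x y" by blast+
      qed
      then obtain F' where "F' \<in> facets link_S" "G \<subseteq> F'" by (rule facet_link_superset)
      show ?thesis
      proof (rule mem_gen_Int_singletonI)
        show "S \<union> F' \<in> (\<union>) S ` facets link_S \<union> {G \<in> X. G \<inter> NS \<noteq> {}}"
          using \<open>F' \<in> facets link_S\<close> by blast
        show "Z \<subseteq> S \<union> F'" using old \<open>G \<subseteq> F'\<close> by blast
      qed (rule old)
    next
      case False
      with old show ?thesis by (intro mem_gen_Int_singletonI[of Z F G]) auto
    qed
  next
    case link
    have "F - NS \<subseteq> V - NS" "\<forall>x\<in>F - NS. \<forall>y\<in>F - NS. \<not> E x y" using F_indep by blast+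
    then obtain F' where "F' \<in> facets link_S" "F - NS \<subseteq> F'" by (rule facet_link_superset)
    show ?thesis
    proof (rule mem_gen_Int_singletonI)
      show "S \<union> F' \<in> (\<union>) S ` facets link_S \<union> {G \<in> X. G \<inter> NS \<noteq> {}}"
        using \<open>F' \<in> facets link_S\<close> by blast
      show "Z \<subseteq> S \<union> F'" using link \<open>F - NS \<subseteq> F'\<close> by blast
      show "Z \<subseteq> F" using link by blast
    qed
  qed
qed

lemma card_deletion_facet_diff_NS:
  assumes F: "F \<in> facets del_S" and A: "A \<in> P" "F \<inter> NS = A"
  shows "card (F - NS) + k = card F"
proof -
  have "finite F" using F finite_V by (auto simp: facet_iff intro: finite_subset)
  then have "card F = card (F \<inter> NS) + card (F - NS)"
    by (metis Int_Diff_disjoint Int_Diff_Un card_Un_disjoint finite_Diff finite_Int)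
  then show ?thesis using A parts_card by simp
qed

text \<open>A generator is the trace of an earlier facet G on F: either G misses the part A, and then the
  trace lies in, hence by size equals, F - N[S]; or G contains all of A.\<close>

lemma ridge_contains_part:
  assumes F: "F \<in> facets del_S" and A: "A \<in> P" "F \<inter> NS = A" "A \<noteq> S"
    and X: "X \<subseteq> facets del_S"
    and faces: "\<forall>\<sigma>\<in>B. \<sigma> \<subseteq> F \<and> card \<sigma> + k = card F" and \<Gamma>: "gen {F} \<inter> gen X = gen B"
    and \<sigma>: "\<sigma> \<in> B" "\<sigma> \<noteq> F - NS"
  shows "A \<subseteq> \<sigma>"
proof -
  have "finite F" using F finite_V by (auto simp: facet_iff intro: finite_subset)
  then have facets: "facets (gen B) = B" using faces by (rule facets_gen_shelling_faces)
  have "\<sigma> \<in> gen {F} \<inter> gen X" using \<Gamma> \<sigma>(1) by (auto simp: gen_def)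
  then obtain G where "G \<in> X" "\<sigma> \<subseteq> F \<inter> G" unfolding mem_gen_Int_singleton_iff by blast
  have "F \<inter> G \<in> gen B" unfolding \<Gamma>[symmetric] using \<open>G \<in> X\<close> by (auto simp: gen_def)
  then have \<sigma>_eq: "\<sigma> = F \<inter> G"
    using \<sigma>(1) \<open>\<sigma> \<subseteq> F \<inter> G\<close> facets unfolding facets_def by blast
  show ?thesis
  proof (cases "G \<inter> A = {}")
    case True
    then have "\<sigma> \<subseteq> F - NS" using \<sigma>_eq A(2) by blast
    moreover have "card \<sigma> = card (F - NS)"
      using faces \<sigma>(1) card_deletion_facet_diff_NS[OF F A(1,2)] by auto
    ultimately have "\<sigma> = F - NS" using \<open>finite F\<close> by (simp add: card_subset_eq)
    with \<sigma>(2) show ?thesis by blast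
  next
    case False
    then obtain z where "z \<in> G" "z \<in> A" by blast
    then have "A \<subseteq> G" using X \<open>G \<in> X\<close> A(1,3) part_subset_deletion_facet by blast
    then show ?thesis using \<sigma>_eq A(2) by blast
  qed
qed

lemma shelling_step_deletion_facet:
  assumes L: "set L = facets del_S" "shelling_order k L" "L = xs @ F # ys" and "F \<inter> NS \<noteq> {}"
  shows "shelling_step k F ((\<union>) S ` facets link_S \<union> {G \<in> set xs. G \<inter> NS \<noteq> {}})"
proof -
  have F: "F \<in> facets del_S" and X: "set xs \<subseteq> facets del_S" using L(1,3) by auto
  obtain A where A: "A \<in> P" "A \<noteq> S" "F \<inter> NS = A"
    using \<open>F \<inter> NS \<noteq> {}\<close> deletion_facet_Int_NS[OF F] by blast
  obtain B where B: "shelling_faces k F B" "gen {F} \<inter> gen (set xs) = gen B"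
  proof (cases "xs = []")
    case True
    then show ?thesis using that[of "{}"] by (simp add: shelling_faces_def)
  next
    case False
    then have "shelling_step k F (set xs)" using L(2,3) by (simp add: shelling_order_def)
    then show ?thesis using that unfolding shelling_step_def by blast
  qed
  have faces: "\<forall>\<sigma>\<in>B. \<sigma> \<subseteq> F \<and> card \<sigma> + k = card F" using B(1) by (simp add: shelling_faces_def)
  show ?thesis
  proof (rule shelling_step_insert_ridge[OF B(1)])
    show "F - NS \<subseteq> F" by blast
    show "card (F - NS) + k = card F" using F A(1,3) by (rule card_deletion_facet_diff_NS)
    have "F - (F - NS) = A" using A(3) by blast
    then show "\<forall>\<sigma>\<in>B. \<sigma> \<noteq> F - NS \<longrightarrow> F - (F - NS) \<subseteq> \<sigma>"
      using ridge_contains_part[OF F A(1,3,2) X faces B(2)] by simp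
    show "gen {F} \<inter> gen ((\<union>) S ` facets link_S \<union> {G \<in> set xs. G \<inter> NS \<noteq> {}})
        = gen B \<union> gen {F - NS}"
      using gen_Int_with_cones[OF F X] B(2) by simp
  qed
qed

lemma shelling_order_cones_append_deletion_facets:
  assumes link: "set Llink = facets link_S" "shelling_order k Llink"
    and del: "set Ldel = facets del_S" "shelling_order k Ldel"
  shows "shelling_order k (map ((\<union>) S) Llink @ filter (\<lambda>G. G \<inter> NS \<noteq> {}) Ldel)"
proof (rule shelling_order_append)
  have "\<forall>F\<in>set Llink. finite F \<and> S \<inter> F = {}"
  proof
    fix F assume "F \<in> set Llink"
    then have "F \<subseteq> V - NS" using link(1) by (simp add: facet_iff)
    then show "finite F \<and> S \<inter> F = {}"
      using finite_V S_subset_NS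
      by (meson Diff_subset finite_subset subset_trans disjoint_iff subsetD DiffD2)
  qed
  then show "shelling_order k (map ((\<union>) S) Llink)"
    using link(2) finite_V S_subset by (intro shelling_order_cone) (auto intro: finite_subset)
next
  fix ys F zs assume "filter (\<lambda>G. G \<inter> NS \<noteq> {}) Ldel = ys @ F # zs"
  then obtain us vs where split: "Ldel = us @ F # vs" "filter (\<lambda>G. G \<inter> NS \<noteq> {}) us = ys"
    using filter_eq_append_ConsD by metis
  have "F \<in> set (filter (\<lambda>G. G \<inter> NS \<noteq> {}) Ldel)" using \<open>filter _ Ldel = ys @ F # zs\<close> by simp
  then have "F \<inter> NS \<noteq> {}" by simp
  with del split(1) have "shelling_step k F ((\<union>) S ` facets link_S \<union> {G \<in> set us. G \<inter> NS \<noteq> {}})"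
    by (rule shelling_step_deletion_facet)
  then show "shelling_step k F (set (map ((\<union>) S) Llink) \<union> set ys)"
    unfolding split(2)[symmetric] using link(1) by simp
qed

theorem k_shellable_indep_complex:
  assumes "k_shellable k del_S" "k_shellable k link_S"
  shows "k_shellable k (indep_complex V E)"
proof -
  have finite_faces: "\<forall>F\<in>indep_complex W E. finite F" if "W \<subseteq> V" for W
    using finite_indep_complex_face finite_subset[OF that finite_V] by blast
  obtain Ldel where del: "distinct Ldel" "set Ldel = facets del_S" "shelling_order k Ldel" and "1 \<le> k"
    using assms(1) k_shellable_iff_shelling_order[OF finite_faces[OF Diff_subset]] by blast
  obtain Llink where link: "distinct Llink" "set Llink = facets link_S" "shelling_order k Llink"
    using assms(2) k_shellable_iff_shelling_order[OF finite_faces[OF Diff_subset]] by blast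
  define Fs where "Fs = map ((\<union>) S) Llink @ filter (\<lambda>G. G \<inter> NS \<noteq> {}) Ldel"
  have "set Fs = facets (indep_complex V E)"
    unfolding Fs_def facets_indep_complex_eq using link(2) del(2) by auto
  moreover have "distinct Fs"
  proof -
    have "inj_on ((\<union>) S) (set Llink)"
      using link(2) S_subset_NS by (intro inj_onI) (auto simp: facet_iff)
    moreover have "S \<subseteq> F" if "F \<in> set (map ((\<union>) S) Llink)" for F using that by auto
    moreover have "S \<inter> F = {}" if "F \<in> set Ldel" for F using that del(2) by (auto simp: facet_iff)
    ultimately show ?thesis
      using link(1) del(1) S_nonempty by (auto simp: Fs_def distinct_map)
  qed
  moreover have "shelling_order k Fs"
    unfolding Fs_def using link(2,3) del(2,3) by (rule shelling_order_cones_append_deletion_facets)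
  moreover have "S \<in> indep_complex V E" using S_subset S_indep by (simp add: indep_complex_def)
  moreover have "k \<le> card S" using card_S by simp
  ultimately show ?thesis
    unfolding k_shellable_iff_shelling_order[OF finite_faces[OF order_refl]] using \<open>1 \<le> k\<close>
    by (intro conjI bexI[of _ S] exI[of _ Fs])
qed

end

theorem theorem4p6:
  fixes V :: "'a set" and E :: "'a \<Rightarrow> 'a \<Rightarrow> bool" and S :: "'a set" and k :: nat
  assumes "simple_graph V E"
    and "k_simplicial k V E S"
    and "k_shellable_graph k (V - S) E"
    and "k_shellable_graph k (V - closed_nbhd_set V E S) E"
  shows "k_shellable_graph k V E"
proof (cases "S = {}")
  case True
  then show ?thesis using assms(3) by simp
next
  case False
  from assms(2) have S: "S \<subseteq> V" "\<forall>x\<in>S. \<forall>y\<in>S. \<not> E x y"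
    unfolding k_simplicial_def by simp_all
  from assms(2) obtain P where P: "\<Union>P = closed_nbhd_set V E S"
      "\<forall>A\<in>P. \<forall>B\<in>P. A \<noteq> B \<longrightarrow> A \<inter> B = {}" "\<forall>A\<in>P. card A = k"
      "\<forall>A\<in>P. \<forall>B\<in>P. \<forall>x\<in>A. \<forall>y\<in>B. E x y \<longleftrightarrow> A \<noteq> B"
      "\<forall>A\<in>P. \<forall>x\<in>A. \<forall>y\<in>A. nbhd V E x = nbhd V E y"
    unfolding k_simplicial_def by (elim conjE exE) blast
  have "k_simplicial_partition V E S k P"
    using assms(1) S False P by unfold_locales
  then show ?thesis
    using assms(3,4) unfolding k_shellable_graph_def
    by (rule k_simplicial_partition.k_shellable_indep_complex)
qed

end
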